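(* Let $G$ be a graph on node set $V=\{1,\dots,n\}$ with symmetric adjacency matrix $A\in\mathbb{R}^{n\times n}$, let $C\subseteq V$ be a set of $m$ coarse nodes, and let $S\in\mathbb{R}^{n\times m}$ be a coarsening matrix whose rows are indexed by $V$ and whose columns are indexed by $C$. Define the coarse graph $G_c$ on node set $C$ by its adjacency matrix $A_c=S^TAS$. For each $j\in C$ let $\chi(j)=\{i\in V: S_{ij}\neq 0\}$ be its aggregation set, and suppose that for every $j\in C$, $\chi(j)$ contains only $j$ itself and direct neighbors of $j$ in $G$. Then, for any $j,j'\in C$, if there is an edge connecting $j$ and $j'$ in $G_c$, the distance between $j$ and $j'$ in $G$ is at most $3$.
   Context: Edges are determined by structural nonzeros: there is an edge between nodes $p,q$ (possibly $p=q$, a self loop) iff the corresponding adjacency entry is structurally nonzero. An entry of $A$ is structurally nonzero iff it is nonzero; an entry $(A_c)_{jj'}=\sum_{i,i'} S_{ij}A_{ii'}S_{i'j'}$ is structurally nonzero if at least one summand $S_{ij}A_{ii'}S_{i'j'}$ is nonzero, even if the summands cancel algebraically. A direct neighbor of $j$ is a node $i\neq j$ with $A_{ij}\neq 0$. The distance between two nodes of $G$ is the number of edges in a shortest path connecting them. *)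

theory Defs
  imports Main "HOL-Library.Extended_Nat"
begin

(* Graph given by an adjacency matrix A on node set V: edge between p and q
   (possibly p = q) iff A p q is (structurally) nonzero. *)

definition is_walk :: "(nat \<Rightarrow> nat \<Rightarrow> real) \<Rightarrow> nat set \<Rightarrow> nat list \<Rightarrow> bool" where
  "is_walk A V p \<longleftrightarrow> p \<noteq> [] \<and> set p \<subseteq> V \<and>
     (\<forall>k. Suc k < length p \<longrightarrow> A (p ! k) (p ! Suc k) \<noteq> 0)"

definition graph_dist :: "(nat \<Rightarrow> nat \<Rightarrow> real) \<Rightarrow> nat set \<Rightarrow> nat \<Rightarrow> nat \<Rightarrow> enat" where
  "graph_dist A V u v =
     (INF p \<in> {p. is_walk A V p \<and> hd p = u \<and> last p = v}. enat (length p - 1))"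

(* Structural edge of the coarse graph A_c = S^T A S between coarse nodes j, j':
   some summand S_ij A_ii' S_i'j' is nonzero. *)
definition coarse_edge :: "(nat \<Rightarrow> nat \<Rightarrow> real) \<Rightarrow> (nat \<Rightarrow> nat \<Rightarrow> real) \<Rightarrow> nat set \<Rightarrow> nat \<Rightarrow> nat \<Rightarrow> bool" where
  "coarse_edge A S V j j' \<longleftrightarrow> (\<exists>i\<in>V. \<exists>i'\<in>V. S i j * A i i' * S i' j' \<noteq> 0)"

definition agg_set :: "(nat \<Rightarrow> nat \<Rightarrow> real) \<Rightarrow> nat set \<Rightarrow> nat \<Rightarrow> nat set" where
  "agg_set S V j = {i \<in> V. S i j \<noteq> 0}"

end

theory Submission
  imports Defs
begin

(* A coarse edge between j and j' comes from a fine edge between some i in the aggregate of j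
   and some i' in the aggregate of j'. Each aggregate member equals its coarse node or is adjacent
   to it, so j, i, i', j' lie on a walk of at most three edges; the triangle inequality for the
   graph distance makes this precise. *)

lemma is_walk_Nil [simp]: "\<not> is_walk A V []"
  by (simp add: is_walk_def)

lemma is_walk_singleton [simp]: "is_walk A V [x] \<longleftrightarrow> x \<in> V"
  by (simp add: is_walk_def)

lemma is_walk_Cons_Cons [simp]:
  "is_walk A V (x # y # p) \<longleftrightarrow> x \<in> V \<and> A x y \<noteq> 0 \<and> is_walk A V (y # p)"
  by (auto simp: is_walk_def nth_Cons' less_Suc_eq_0_disj split: if_splits)

lemma is_walk_append:
  assumes "is_walk A V p" "is_walk A V (last p # r)"
  shows "is_walk A V (p @ r)"
  using assms by (induction p rule: induct_list012) auto

lemma graph_dist_le_walk: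
  assumes "is_walk A V p" "hd p = u" "last p = v"
  shows "graph_dist A V u v \<le> enat (length p - 1)"
  unfolding graph_dist_def using assms by (intro INF_lower) auto

lemma graph_dist_attained:
  assumes "graph_dist A V u v \<noteq> \<infinity>"
  obtains p where "is_walk A V p" "hd p = u" "last p = v" "graph_dist A V u v = enat (length p - 1)"
proof -
  let ?W = "{p. is_walk A V p \<and> hd p = u \<and> last p = v}"
  have "?W \<noteq> {}"
  proof
    assume "?W = {}"
    then have "graph_dist A V u v = Inf {}"
      by (simp only: graph_dist_def image_empty)
    then have "graph_dist A V u v = \<infinity>"
      by (simp add: top_enat_def)
    with assms show False ..
  qed
  then have "Inf ((\<lambda>p. enat (length p - 1)) ` ?W) \<in> (\<lambda>p. enat (length p - 1)) ` ?W"
    unfolding Inf_enat_def by (auto intro: LeastI)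
  then show ?thesis
    using that unfolding graph_dist_def by blast
qed

lemma graph_dist_triangle: "graph_dist A V u w \<le> graph_dist A V u v + graph_dist A V v w"
proof (cases "graph_dist A V u v = \<infinity> \<or> graph_dist A V v w = \<infinity>")
  case False
  then obtain p q where p: "is_walk A V p" "hd p = u" "last p = v"
      "graph_dist A V u v = enat (length p - 1)"
    and q: "is_walk A V q" "hd q = v" "last q = w" "graph_dist A V v w = enat (length q - 1)"
    by (metis graph_dist_attained)
  have "p \<noteq> []" "q \<noteq> []"
    using p(1) q(1) by auto
  obtain r where r: "q = v # r"
    using \<open>q \<noteq> []\<close> q(2) by (cases q) auto
  have "graph_dist A V u w \<le> enat (length (p @ r) - 1)"
    using p q r \<open>p \<noteq> []\<close> by (intro graph_dist_le_walk is_walk_append) (auto simp: last_append)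
  also have "\<dots> = graph_dist A V u v + graph_dist A V v w"
    using p(4) q(4) r \<open>p \<noteq> []\<close> by (cases p) auto
  finally show ?thesis .
qed auto

lemma graph_dist_le_one:
  assumes "u \<in> V" "v \<in> V" "u = v \<or> A u v \<noteq> 0"
  shows "graph_dist A V u v \<le> 1"
proof -
  define p where "p = (if u = v then [u] else [u, v])"
  have "graph_dist A V u v \<le> enat (length p - 1)"
    using assms by (intro graph_dist_le_walk) (auto simp: p_def)
  also have "\<dots> \<le> 1"
    by (simp add: p_def one_enat_def)
  finally show ?thesis .
qed

theorem corollary1:
  fixes n :: nat and A :: "nat \<Rightarrow> nat \<Rightarrow> real" and S :: "nat \<Rightarrow> nat \<Rightarrow> real"
    and C :: "nat set"
  assumes symA: "\<forall>i\<in>{1..n}. \<forall>i'\<in>{1..n}. A i i' = A i' i"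
    and CV: "C \<subseteq> {1..n}"
    and agg: "\<forall>j\<in>C. \<forall>i\<in>agg_set S {1..n} j. i = j \<or> (i \<noteq> j \<and> A i j \<noteq> 0)"
    and jC: "j \<in> C" and j'C: "j' \<in> C"
    and edge: "coarse_edge A S {1..n} j j'"
  shows "graph_dist A {1..n} j j' \<le> 3"
proof -
  let ?d = "graph_dist A {1..n}"
  obtain i i' where i: "i \<in> agg_set S {1..n} j" and i': "i' \<in> agg_set S {1..n} j'"
    and ii': "A i i' \<noteq> 0"
    using edge by (auto simp: coarse_edge_def agg_set_def)
  have V: "i \<in> {1..n}" "i' \<in> {1..n}" "j \<in> {1..n}" "j' \<in> {1..n}"
    using i i' jC j'C CV by (auto simp: agg_set_def)
  have "?d j i \<le> 1"
    using agg jC i symA V by (intro graph_dist_le_one) auto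
  moreover have "?d i i' \<le> 1"
    using ii' V by (intro graph_dist_le_one) auto
  moreover have "?d i' j' \<le> 1"
    using agg j'C i' V by (intro graph_dist_le_one) auto
  moreover have "?d j j' \<le> ?d j i + (?d i i' + ?d i' j')"
    by (metis graph_dist_triangle add_left_mono order_trans)
  ultimately have "?d j j' \<le> 1 + (1 + 1)"
    by (meson add_mono order_trans)
  then show ?thesis
    by simp
qed

end
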